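(* Let $\alpha>0$ and $\kappa_l=l^{-\alpha}$. For even $N\ge4$ let $\gamma_\alpha(N)=\sum_{n=0}^{N-1}|f_N(k_n)|$ with $f_N(k)=2\sum_{l=1}^{N/2-1}l^{-\alpha}\sin(kl)+(N/2)^{-\alpha}$ and $k_n=(2n+1)\pi/N$. Then there exist constants $0<c\le C$ and $N_0$ (depending on $\alpha$) such that $c\,N\le\gamma_\alpha(N)\le C\,N$ for all even $N\ge N_0$. Consequently $I_0(\Delta)=[\gamma_\alpha(N)/2]^2T^2$ obeys Heisenberg scaling $\asymp T^2N^2$ for every $\alpha>0$; for power-law decay, super-Heisenberg scaling occurs only at $\alpha=0$.
   Context: $T>0$ is the probe time; $I_0(\Delta)=[\gamma_\alpha(N)/2]^2T^2$ is the optimally controlled quantum Fisher information for estimating the pairing strength $\Delta$ in the long-range Kitaev chain with decay law $\kappa_l$. *)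

theory Defs
  imports Complex_Main
begin

definition fN :: "real \<Rightarrow> nat \<Rightarrow> real \<Rightarrow> real" where
  "fN \<alpha> N k = 2 * (\<Sum>l = 1..N div 2 - 1. real l powr (-\<alpha>) * sin (k * real l))
               + (real N / 2) powr (-\<alpha>)"

definition kmom :: "nat \<Rightarrow> nat \<Rightarrow> real" where
  "kmom N n = (2 * real n + 1) * pi / real N"

definition gamma_alpha :: "real \<Rightarrow> nat \<Rightarrow> real" where
  "gamma_alpha \<alpha> N = (\<Sum>n = 0..<N. \<bar>fN \<alpha> N (kmom N n)\<bar>)"

definition I0 :: "real \<Rightarrow> nat \<Rightarrow> real \<Rightarrow> real" where
  "I0 \<alpha> N T = (gamma_alpha \<alpha> N / 2)^2 * T^2"

end

theory Submission
  imports Defs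
begin

(* Lower bound: on the grid k_n the functions sin (k l), 1 <= l < N - 1, are orthogonal to sin k,
   so sum_n f_N(k_n) sin k_n = N, and |sin| <= 1 gives gamma_alpha(N) >= N.
   Upper bound: f_N = 2 S + (N/2)^(-alpha) with S(k) = sum_l l^(-alpha) sin (k l), and |S(k_n)| is
   symmetric under n -> N - 1 - n. For k = m pi / N with m odd, the terms with l <= N / m are at most
   k l^(1 - alpha), while Abel summation bounds the remaining tail by (N/m)^(-alpha) / sin (k/2), which is
   O((N/m)^(1 - alpha)). Summing both bounds over odd m < N gives O((1 + 1/alpha) N). *)

lemma sum_cos_odd_multiples:
  "2 * sin \<theta> * (\<Sum>n<N. cos ((2 * real n + 1) * \<theta>)) = sin (2 * real N * \<theta>)"
proof -
  define f where "f = (\<lambda>n::nat. sin (2 * real n * \<theta>))"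
  have "2 * sin \<theta> * cos ((2 * real n + 1) * \<theta>) = f (Suc n) - f n" for n
  proof -
    have "f (Suc n) = sin ((2 * real n + 1) * \<theta> + \<theta>)" "f n = sin ((2 * real n + 1) * \<theta> - \<theta>)"
      by (simp_all add: f_def algebra_simps)
    then show ?thesis by (simp add: sin_add sin_diff)
  qed
  then show ?thesis
    by (simp add: sum_distrib_left sum_lessThan_telescope) (simp add: f_def)
qed

lemma sum_sin_odd_multiples:
  "2 * sin \<theta> * (\<Sum>n<N. sin ((2 * real n + 1) * \<theta>)) = 1 - cos (2 * real N * \<theta>)"
proof -
  define f where "f = (\<lambda>n::nat. - cos (2 * real n * \<theta>))"
  have "2 * sin \<theta> * sin ((2 * real n + 1) * \<theta>) = f (Suc n) - f n" for n
  proof -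
    have "f (Suc n) = - cos ((2 * real n + 1) * \<theta> + \<theta>)" "f n = - cos ((2 * real n + 1) * \<theta> - \<theta>)"
      by (simp_all add: f_def algebra_simps)
    then show ?thesis by (simp add: cos_add cos_diff)
  qed
  then show ?thesis
    by (simp add: sum_distrib_left sum_lessThan_telescope) (simp add: f_def)
qed

lemma abs_sum_sin_multiples_le:
  fixes k :: real
  assumes "sin (k / 2) > 0"
  shows "\<bar>\<Sum>l = p..q. sin (k * real l)\<bar> \<le> 1 / sin (k / 2)"
proof (cases "p \<le> q")
  case False
  then show ?thesis using assms by simp
next
  case True
  define c where "c = (\<lambda>l::nat. cos (k * real l - k / 2))"
  have "2 * sin (k / 2) * sin (k * real l) = c l - c (Suc l)" for l
    unfolding c_def by (simp add: cos_diff cos_add algebra_simps)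
  then have "2 * sin (k / 2) * (\<Sum>l = p..q. sin (k * real l)) = c p - c (Suc q)"
    using sum_Suc_diff[of p q "\<lambda>l. - c l"] True by (simp add: sum_distrib_left)
  moreover have "\<bar>c p - c (Suc q)\<bar> \<le> 2"
    unfolding c_def using abs_cos_le_one[of "k * real p - k / 2"]
      abs_cos_le_one[of "k * real (Suc q) - k / 2"] by linarith
  ultimately have "2 * sin (k / 2) * \<bar>\<Sum>l = p..q. sin (k * real l)\<bar> \<le> 2"
    using assms by (simp add: abs_mult)
  then show ?thesis using assms by (simp add: field_simps)
qed

lemma sin_ge_third:
  fixes x :: real
  assumes "0 \<le> x" "x \<le> pi / 2"
  shows "x / 3 \<le> sin x"
proof -
  have "\<bar>sin x - (\<Sum>m<3. sin_coeff m * x ^ m)\<bar> \<le> inverse (fact 3) * \<bar>x\<bar> ^ 3"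
    by (rule Maclaurin_sin_bound)
  moreover have "(\<Sum>m<3. sin_coeff m * x ^ m) = x"
    by (simp add: sin_coeff_def numeral_3_eq_3)
  moreover have "inverse (fact 3) * \<bar>x\<bar> ^ 3 = x * (x * x) / 6"
    using assms by (simp add: fact_numeral power3_eq_cube field_simps)
  ultimately have "\<bar>sin x - x\<bar> \<le> x * (x * x) / 6" by simp
  moreover have "x * x \<le> 2 * 2"
    using assms pi_less_4 by (intro mult_mono) auto
  then have "x * (x * x) \<le> x * 4"
    using assms by (intro mult_left_mono) auto
  ultimately show ?thesis by linarith
qed

lemma abs_sum_mult_le_abel:
  fixes a x :: "nat \<Rightarrow> real"
  assumes decreasing: "\<And>l. p \<le> l \<Longrightarrow> a (Suc l) \<le> a l"
    and nonneg: "\<And>l. p \<le> l \<Longrightarrow> 0 \<le> a l"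
    and "0 \<le> B"
    and partial_sums: "\<And>l. p \<le> l \<Longrightarrow> l \<le> q \<Longrightarrow> \<bar>\<Sum>j = p..l. x j\<bar> \<le> B"
  shows "\<bar>\<Sum>l = p..q. a l * x l\<bar> \<le> a p * B"
proof (cases "p \<le> q")
  case False
  then show ?thesis using \<open>0 \<le> B\<close> nonneg[of p] by simp
next
  case True
  define P where "P = (\<lambda>l. \<Sum>j = p..l. x j)"
  have summation_by_parts:
    "(\<Sum>l = p..q. a l * x l) = a q * P q + (\<Sum>l = p..<q. (a l - a (Suc l)) * P l)"
    using True
  proof (induction q rule: dec_induct)
    case base
    then show ?case by (simp add: P_def)
  next
    case (step n)
    have "P (Suc n) = P n + x (Suc n)" unfolding P_def using step(1) by simp
    then show ?case using step by (simp add: algebra_simps)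
  qed
  have "\<bar>a q * P q\<bar> \<le> a q * B"
    using partial_sums[of q] True nonneg[of q] by (simp add: abs_mult P_def mult_left_mono)
  moreover have "\<bar>\<Sum>l = p..<q. (a l - a (Suc l)) * P l\<bar> \<le> (\<Sum>l = p..<q. (a l - a (Suc l)) * B)"
  proof (rule order_trans[OF sum_abs sum_mono])
    fix l assume "l \<in> {p..<q}"
    then have "a (Suc l) \<le> a l" "\<bar>P l\<bar> \<le> B" using decreasing partial_sums unfolding P_def by auto
    then show "\<bar>(a l - a (Suc l)) * P l\<bar> \<le> (a l - a (Suc l)) * B"
      by (simp add: abs_mult mult_left_mono)
  qed
  moreover have "(\<Sum>l = p..<q. (a l - a (Suc l)) * B) = (a p - a q) * B"
    using sum_Suc_diff'[of p q "\<lambda>l. - a l"] True by (simp add: sum_distrib_right[symmetric])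
  ultimately show ?thesis unfolding summation_by_parts
    by (smt (verit) abs_triangle_ineq left_diff_distrib)
qed

lemma sum_lessThan_double_reflect:
  fixes g :: "nat \<Rightarrow> 'a::comm_semiring_1"
  assumes "\<And>n. n < 2 * h \<Longrightarrow> g (2 * h - Suc n) = g n"
  shows "(\<Sum>n<2 * h. g n) = 2 * (\<Sum>n<h. g n)"
proof -
  have "(\<Sum>n<2 * h. g n) = (\<Sum>n<h. g n) + (\<Sum>n = h..<2 * h. g n)"
    by (simp add: sum.atLeastLessThan_concat[symmetric] lessThan_atLeast0 del: mult_2)
  also have "(\<Sum>n = h..<2 * h. g n) = (\<Sum>n<h. g (2 * h - Suc n))"
    by (rule sum.reindex_bij_witness[of _ "\<lambda>n. 2 * h - Suc n" "\<lambda>n. 2 * h - Suc n"]) auto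
  also have "\<dots> = (\<Sum>n<h. g n)" using assms by simp
  finally show ?thesis by (simp add: mult_2)
qed

lemma powr_diff_mvt:
  fixes a b p :: real
  assumes "0 < a" "a < b"
  obtains z where "a < z" "z < b" "b powr p - a powr p = (b - a) * (p * z powr (p - 1))"
proof -
  have "\<And>x. a \<le> x \<Longrightarrow> x \<le> b \<Longrightarrow> DERIV (\<lambda>z. z powr p) x :> p * x powr (p - 1)"
    using assms by (intro has_real_derivative_powr) auto
  from MVT2[OF assms(2) this] show ?thesis using that by blast
qed

lemma powr_diff_pred_ge:
  fixes \<alpha> :: real
  assumes "0 < \<alpha>" "\<alpha> \<le> 1" "1 \<le> j"
  shows "\<alpha> * real j powr (\<alpha> - 1) \<le> real j powr \<alpha> - real (j - 1) powr \<alpha>"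
proof (cases "j = 1")
  case True
  then show ?thesis using assms by simp
next
  case False
  then have "0 < real (j - 1)" "real (j - 1) < real j" using assms by auto
  then obtain z where z: "real (j - 1) < z" "z < real j"
    "real j powr \<alpha> - real (j - 1) powr \<alpha> = (real j - real (j - 1)) * (\<alpha> * z powr (\<alpha> - 1))"
    by (rule powr_diff_mvt)
  moreover have "real j powr (\<alpha> - 1) \<le> z powr (\<alpha> - 1)"
    using z assms False by (intro powr_mono2') auto
  ultimately show ?thesis using assms False by simp
qed

lemma powr_neg_diff_pred_ge:
  fixes \<alpha> :: real
  assumes "0 < \<alpha>" "2 \<le> l"
  shows "\<alpha> * real l powr (- 1 - \<alpha>) \<le> real (l - 1) powr (- \<alpha>) - real l powr (- \<alpha>)"
proof -
  have "0 < real (l - 1)" "real (l - 1) < real l" using assms by auto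
  then obtain z where z: "real (l - 1) < z" "z < real l"
    "real l powr (- \<alpha>) - real (l - 1) powr (- \<alpha>) = (real l - real (l - 1)) * (- \<alpha> * z powr (- \<alpha> - 1))"
    by (rule powr_diff_mvt)
  moreover have "real l - real (l - 1) = 1" "- \<alpha> - 1 = - 1 - \<alpha>"
    using assms by auto
  ultimately have "real (l - 1) powr (- \<alpha>) - real l powr (- \<alpha>) = \<alpha> * z powr (- 1 - \<alpha>)"
    by simp
  moreover have "\<alpha> * real l powr (- 1 - \<alpha>) \<le> \<alpha> * z powr (- 1 - \<alpha>)"
    using z assms by (intro mult_left_mono powr_mono2') auto
  ultimately show ?thesis by simp
qed

lemma sum_powr_minus_one_le:
  fixes \<alpha> :: real
  assumes "0 < \<alpha>"
  shows "(\<Sum>j = 1..K. real j powr (\<alpha> - 1)) \<le> (1 + 1 / \<alpha>) * real K powr \<alpha>"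
proof (cases "\<alpha> \<le> 1")
  case True
  have "\<alpha> * (\<Sum>j = 1..K. real j powr (\<alpha> - 1)) \<le> (\<Sum>j = 1..K. real j powr \<alpha> - real (j - 1) powr \<alpha>)"
    unfolding sum_distrib_left by (rule sum_mono) (use powr_diff_pred_ge assms True in auto)
  also have "\<dots> = (\<Sum>i<K. real (Suc i) powr \<alpha> - real i powr \<alpha>)"
    by (rule sum.reindex_bij_witness[of _ Suc "\<lambda>j. j - 1"]) auto
  also have "\<dots> = real K powr \<alpha>"
    using sum_lessThan_telescope[of "\<lambda>i. real i powr \<alpha>" K] assms by simp
  finally have "(\<Sum>j = 1..K. real j powr (\<alpha> - 1)) \<le> real K powr \<alpha> / \<alpha>"
    using assms by (simp add: field_simps)
  also have "\<dots> \<le> (1 + 1 / \<alpha>) * real K powr \<alpha>"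
    using assms by (simp add: field_simps)
  finally show ?thesis .
next
  case False
  have "(\<Sum>j = 1..K. real j powr (\<alpha> - 1)) \<le> (\<Sum>j = 1..K. real K powr (\<alpha> - 1))"
    by (rule sum_mono) (use False in \<open>auto intro!: powr_mono2\<close>)
  also have "\<dots> = real K powr \<alpha>"
    by (cases "K = 0") (simp_all add: powr_diff)
  also have "\<dots> \<le> (1 + 1 / \<alpha>) * real K powr \<alpha>"
    using assms by (simp add: field_simps)
  finally show ?thesis .
qed

lemma sum_powr_neg_one_minus_le:
  fixes \<alpha> :: real
  assumes "0 < \<alpha>"
  shows "(\<Sum>l = 1..K. real l powr (- 1 - \<alpha>)) \<le> 1 + 1 / \<alpha>"
proof (cases K)
  case 0
  then show ?thesis using assms by simp
next
  case (Suc K')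
  have "(\<Sum>l = 1..K. real l powr (- 1 - \<alpha>)) = 1 + (\<Sum>l = 2..K. real l powr (- 1 - \<alpha>))"
    unfolding Suc by (simp add: sum.atLeast_Suc_atMost numeral_2_eq_2)
  moreover have "\<alpha> * (\<Sum>l = 2..K. real l powr (- 1 - \<alpha>))
      \<le> (\<Sum>l = 2..K. real (l - 1) powr (- \<alpha>) - real l powr (- \<alpha>))"
    unfolding sum_distrib_left by (rule sum_mono) (use powr_neg_diff_pred_ge assms in auto)
  moreover have "(\<Sum>l = 2..K. real (l - 1) powr (- \<alpha>) - real l powr (- \<alpha>))
      = (\<Sum>i<K'. real (Suc i) powr (- \<alpha>) - real (Suc (Suc i)) powr (- \<alpha>))"
    unfolding Suc by (rule sum.reindex_bij_witness[of _ "\<lambda>i. i + 2" "\<lambda>l. l - 2"]) auto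
  moreover have "\<dots> \<le> 1"
    using sum_lessThan_telescope'[of "\<lambda>i. real (Suc i) powr (- \<alpha>)" K'] by simp
  ultimately show ?thesis using assms by (simp add: field_simps)
qed

lemma sum_cos_kmom_eq_0:
  assumes "0 < j" "j < N"
  shows "(\<Sum>n<N. cos (kmom N n * real j)) = 0"
proof -
  define \<theta> where "\<theta> = real j * pi / real N"
  have "sin \<theta> > 0"
    using assms by (intro sin_gt_zero) (auto simp: \<theta>_def field_simps)
  moreover have "kmom N n * real j = (2 * real n + 1) * \<theta>" for n
    by (simp add: kmom_def \<theta>_def)
  moreover have "sin (2 * real N * \<theta>) = 0"
  proof -
    have "2 * real N * \<theta> = real (2 * j) * pi" using assms by (simp add: \<theta>_def)
    then show ?thesis by (simp only: sin_npi)
  qed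
  ultimately show ?thesis
    using sum_cos_odd_multiples[of \<theta> N] by simp
qed

lemma sum_sin_kmom_eq_0:
  assumes "2 \<le> N"
  shows "(\<Sum>n<N. sin (kmom N n)) = 0"
proof -
  define \<theta> where "\<theta> = pi / real N"
  have "sin \<theta> > 0"
    using assms by (intro sin_gt_zero) (auto simp: \<theta>_def field_simps)
  moreover have "kmom N n = (2 * real n + 1) * \<theta>" for n
    by (simp add: kmom_def \<theta>_def)
  moreover have "cos (2 * real N * \<theta>) = 1"
    using assms by (simp add: \<theta>_def)
  ultimately show ?thesis
    using sum_sin_odd_multiples[of \<theta> N] by simp
qed

lemma sum_sin_kmom_mult_sin_kmom:
  assumes "1 \<le> l" "l + 1 < N"
  shows "(\<Sum>n<N. sin (kmom N n * real l) * sin (kmom N n)) = (if l = 1 then real N / 2 else 0)"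
proof -
  have "sin (kmom N n * real l) * sin (kmom N n) =
      (cos (kmom N n * real (l - 1)) - cos (kmom N n * real (l + 1))) / 2" for n
    using assms by (simp add: of_nat_diff cos_diff cos_add algebra_simps)
  then have "(\<Sum>n<N. sin (kmom N n * real l) * sin (kmom N n)) =
      ((\<Sum>n<N. cos (kmom N n * real (l - 1))) - (\<Sum>n<N. cos (kmom N n * real (l + 1)))) / 2"
    by (simp only: sum_divide_distrib[symmetric] sum_subtractf)
  moreover have "(\<Sum>n<N. cos (kmom N n * real (l + 1))) = 0"
    using assms by (intro sum_cos_kmom_eq_0) auto
  moreover have "(\<Sum>n<N. cos (kmom N n * real (l - 1))) = 0" if "l \<noteq> 1"
    using assms that by (intro sum_cos_kmom_eq_0) auto
  ultimately show ?thesis by auto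
qed

lemma sum_fN_kmom_mult_sin_kmom:
  assumes "4 \<le> N"
  shows "(\<Sum>n<N. fN \<alpha> N (kmom N n) * sin (kmom N n)) = real N"
proof -
  define M where "M = N div 2 - 1"
  have "(\<Sum>n<N. fN \<alpha> N (kmom N n) * sin (kmom N n)) =
      2 * (\<Sum>l = 1..M. real l powr (- \<alpha>) * (\<Sum>n<N. sin (kmom N n * real l) * sin (kmom N n)))
      + (real N / 2) powr (- \<alpha>) * (\<Sum>n<N. sin (kmom N n))"
    unfolding fN_def M_def[symmetric]
    by (simp add: algebra_simps sum.distrib sum_distrib_left sum_distrib_right sum.swap[of _ "{..<N}"])
  also have "\<dots> = 2 * (\<Sum>l = 1..M. real l powr (- \<alpha>) * (if l = 1 then real N / 2 else 0))"
  proof -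
    have "(\<Sum>n<N. sin (kmom N n * real l) * sin (kmom N n)) = (if l = 1 then real N / 2 else 0)"
      if "l \<in> {1..M}" for l
      using that assms by (intro sum_sin_kmom_mult_sin_kmom) (auto simp: M_def)
    then show ?thesis using assms by (simp add: sum_sin_kmom_eq_0)
  qed
  also have "\<dots> = real N"
    using assms by (simp add: if_distrib sum.delta' M_def cong: if_cong)
  finally show ?thesis .
qed

lemma gamma_alpha_ge:
  assumes "4 \<le> N"
  shows "real N \<le> gamma_alpha \<alpha> N"
proof -
  have "real N \<le> (\<Sum>n<N. \<bar>fN \<alpha> N (kmom N n) * sin (kmom N n)\<bar>)"
    unfolding sum_fN_kmom_mult_sin_kmom[OF assms, where \<alpha> = \<alpha>, symmetric]
    by (rule order_trans[OF abs_ge_self sum_abs])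
  also have "\<dots> \<le> (\<Sum>n<N. \<bar>fN \<alpha> N (kmom N n)\<bar>)"
    by (rule sum_mono) (simp add: abs_mult mult_left_le)
  finally show ?thesis unfolding gamma_alpha_def by (simp add: atLeast0LessThan)
qed

definition sine_sum :: "real \<Rightarrow> nat \<Rightarrow> real \<Rightarrow> real" where
  "sine_sum \<alpha> M k = (\<Sum>l = 1..M. real l powr (- \<alpha>) * sin (k * real l))"

lemma fN_eq_sine_sum: "fN \<alpha> N k = 2 * sine_sum \<alpha> (N div 2 - 1) k + (real N / 2) powr (- \<alpha>)"
  by (simp add: fN_def sine_sum_def)

lemma sine_sum_kmom_reflect:
  assumes "n < N"
  shows "sine_sum \<alpha> M (kmom N (N - Suc n)) = - sine_sum \<alpha> M (kmom N n)"
proof -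
  have "kmom N (N - Suc n) = 2 * pi - kmom N n"
    using assms by (simp add: kmom_def of_nat_diff field_simps)
  moreover have "sin ((2 * pi - kmom N n) * real l) = - sin (kmom N n * real l)" for l :: nat
  proof -
    have "(2 * pi - kmom N n) * real l = real (2 * l) * pi - kmom N n * real l"
      by (simp add: algebra_simps)
    then show ?thesis by (simp add: sin_diff)
  qed
  ultimately show ?thesis unfolding sine_sum_def by (simp add: sum_negf)
qed

lemma abs_sine_sum_le:
  assumes "0 < \<alpha>" "0 < k" "k < pi"
  shows "\<bar>sine_sum \<alpha> M k\<bar> \<le> k * (\<Sum>l = 1..L. real l powr (1 - \<alpha>)) + real (Suc L) powr (- \<alpha>) / sin (k / 2)"
proof -
  define t where "t = (\<lambda>l::nat. real l powr (- \<alpha>) * sin (k * real l))"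
  have sin_half_pos: "0 < sin (k / 2)"
    using assms by (intro sin_gt_zero) auto
  have "sine_sum \<alpha> M k = (\<Sum>l\<in>{1..M} \<inter> {..L}. t l) + (\<Sum>l\<in>{1..M} - {..L}. t l)"
    unfolding sine_sum_def t_def by (rule sum.Int_Diff) simp
  also have "{1..M} - {..L} = {Suc L..M}" by auto
  finally have split: "sine_sum \<alpha> M k = (\<Sum>l\<in>{1..M} \<inter> {..L}. t l) + (\<Sum>l = Suc L..M. t l)" .
  have term_le: "\<bar>t l\<bar> \<le> k * real l powr (1 - \<alpha>)" for l
  proof -
    have "\<bar>sin (k * real l)\<bar> \<le> k * real l"
      using abs_sin_x_le_abs_x[of "k * real l"] assms by simp
    then have "\<bar>t l\<bar> \<le> real l powr (- \<alpha>) * (k * real l)"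
      unfolding t_def by (simp add: abs_mult mult_left_mono)
    also have "\<dots> = k * real l powr (1 - \<alpha>)"
      using powr_mult_base[of "real l" "- \<alpha>"] by (simp add: algebra_simps)
    finally show ?thesis .
  qed
  have "\<bar>\<Sum>l\<in>{1..M} \<inter> {..L}. t l\<bar> \<le> (\<Sum>l\<in>{1..M} \<inter> {..L}. \<bar>t l\<bar>)"
    by (rule sum_abs)
  also have "\<dots> \<le> (\<Sum>l = 1..L. \<bar>t l\<bar>)"
    by (rule sum_mono2) auto
  also have "\<dots> \<le> (\<Sum>l = 1..L. k * real l powr (1 - \<alpha>))"
    by (rule sum_mono) (rule term_le)
  finally have head: "\<bar>\<Sum>l\<in>{1..M} \<inter> {..L}. t l\<bar> \<le> k * (\<Sum>l = 1..L. real l powr (1 - \<alpha>))"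
    by (simp add: sum_distrib_left)
  have "\<bar>\<Sum>l = Suc L..M. t l\<bar> \<le> real (Suc L) powr (- \<alpha>) * (1 / sin (k / 2))"
    unfolding t_def
  proof (rule abs_sum_mult_le_abel)
    fix l
    show "real (Suc l) powr (- \<alpha>) \<le> real l powr (- \<alpha>)" if "Suc L \<le> l"
      using that assms by (intro powr_mono2') auto
    show "\<bar>\<Sum>j = Suc L..l. sin (k * real j)\<bar> \<le> 1 / sin (k / 2)"
      by (rule abs_sum_sin_multiples_le[OF sin_half_pos])
  qed (use sin_half_pos in auto)
  then have tail: "\<bar>\<Sum>l = Suc L..M. t l\<bar> \<le> real (Suc L) powr (- \<alpha>) / sin (k / 2)"
    by simp
  show ?thesis
    unfolding split using head tail abs_triangle_ineq[of "\<Sum>l\<in>{1..M} \<inter> {..L}. t l" "\<Sum>l = Suc L..M. t l"]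
    by linarith
qed

lemma abs_sine_sum_kmom_le:
  assumes "0 < \<alpha>" "n < N div 2"
  shows "\<bar>sine_sum \<alpha> M (kmom N n)\<bar> \<le> kmom N n * (\<Sum>l = 1..N div (2 * n + 1). real l powr (1 - \<alpha>))
           + 3 * (real N / real (2 * n + 1)) powr (1 - \<alpha>)"
proof -
  define m where "m = 2 * n + 1"
  define k where "k = kmom N n"
  define L where "L = N div m"
  have "m < N" "0 < m" using assms unfolding m_def by auto
  moreover have k_eq: "k = real m * pi / real N"
    by (simp add: k_def kmom_def m_def)
  ultimately have k: "k = real m * pi / real N" "0 < k" "k < pi"
    by (auto simp: divide_less_eq)
  have ratio_pos: "0 < real N / real m" using \<open>m < N\<close> \<open>0 < m\<close> by simp
  have "N < m * Suc L"
    using dividend_less_times_div[OF \<open>0 < m\<close>, of N] unfolding L_def by simp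
  then have "real N < real m * real (Suc L)"
    by (metis of_nat_less_iff of_nat_mult)
  then have "real N / real m \<le> real (Suc L)"
    using \<open>0 < m\<close> by (simp add: pos_divide_le_eq mult.commute)
  then have powr_le: "real (Suc L) powr (- \<alpha>) \<le> (real N / real m) powr (- \<alpha>)"
    using ratio_pos assms by (intro powr_mono2') auto
  have inverse_sin_le: "1 / sin (k / 2) \<le> 3 * (real N / real m)"
  proof -
    have "k / 6 \<le> sin (k / 2)" using sin_ge_third[of "k / 2"] k(2,3) by simp
    then have "1 / sin (k / 2) \<le> 6 / k" using k(2) by (simp add: field_simps)
    also have "\<dots> = (6 / pi) * (real N / real m)" using \<open>0 < m\<close> k(1,2) by simp
    also have "\<dots> \<le> 3 * (real N / real m)"
      using pi_ge_two ratio_pos by (intro mult_right_mono) (auto simp: field_simps)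
    finally show ?thesis .
  qed
  have "real (Suc L) powr (- \<alpha>) / sin (k / 2) = real (Suc L) powr (- \<alpha>) * (1 / sin (k / 2))"
    by simp
  also have "\<dots> \<le> (real N / real m) powr (- \<alpha>) * (3 * (real N / real m))"
    using powr_le inverse_sin_le k(2,3) by (intro mult_mono) (auto intro: sin_ge_zero)
  also have "\<dots> = 3 * ((real N / real m) * (real N / real m) powr (- \<alpha>))"
    by (simp only: mult_ac)
  also have "(real N / real m) * (real N / real m) powr (- \<alpha>) = (real N / real m) powr (1 - \<alpha>)"
    using powr_mult_base[of "real N / real m" "- \<alpha>"] ratio_pos by simp
  finally show ?thesis
    using abs_sine_sum_le[OF assms(1) k(2,3), of M L] unfolding k_def m_def L_def by linarith
qed

lemma sum_kmom_restricted_le: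
  assumes "1 \<le> l"
  shows "(\<Sum>n\<in>{n \<in> {..<N div 2}. l \<le> N div (2 * n + 1)}. kmom N n) \<le> pi * real N / (real l)\<^sup>2"
proof -
  define A where "A = {n \<in> {..<N div 2}. l \<le> N div (2 * n + 1)}"
  have mult_le: "(2 * n + 1) * l \<le> N" if "n \<in> A" for n
    using that unfolding A_def by (simp add: less_eq_div_iff_mult_less_eq mult.commute)
  have kmom_le: "kmom N n \<le> pi / real l" if "n \<in> A" for n
  proof -
    have "0 < N" using that unfolding A_def by (cases "N = 0") auto
    have "real (2 * n + 1) * real l \<le> real N"
      using mult_le[OF that] by (metis of_nat_le_iff of_nat_mult)
    then have "(2 * real n + 1) * real l * pi \<le> real N * pi"
      by (intro mult_right_mono) (auto simp: add.commute)
    then show ?thesis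
      using \<open>0 < N\<close> assms by (simp add: kmom_def field_simps)
  qed
  have "A \<subseteq> {..<N div l}"
  proof
    fix n assume "n \<in> A"
    then have "2 * n + 1 \<le> N div l"
      using mult_le assms by (simp add: less_eq_div_iff_mult_less_eq)
    then show "n \<in> {..<N div l}" by simp
  qed
  then have "real (card A) \<le> real (N div l)"
    using card_mono[of "{..<N div l}" A] by simp
  also have "\<dots> \<le> real N / real l"
    by (rule of_nat_div_le_of_nat)
  finally have card_le: "real (card A) \<le> real N / real l" .
  have "(\<Sum>n\<in>A. kmom N n) \<le> real (card A) * (pi / real l)"
    by (rule sum_bounded_above) (rule kmom_le)
  also have "\<dots> \<le> real N / real l * (pi / real l)"
    by (rule mult_right_mono) (use card_le in auto)
  also have "\<dots> = pi * real N / (real l)\<^sup>2"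
    by (simp add: power2_eq_square)
  finally show ?thesis unfolding A_def .
qed

lemma sum_kmom_mult_sum_powr_le:
  assumes "0 < \<alpha>"
  shows "(\<Sum>n<N div 2. kmom N n * (\<Sum>l = 1..N div (2 * n + 1). real l powr (1 - \<alpha>)))
         \<le> pi * (1 + 1 / \<alpha>) * real N"
proof -
  have "{1..N div (2 * n + 1)} = {l \<in> {1..N}. l \<le> N div (2 * n + 1)}" for n
    by (auto intro: order_trans[OF _ div_le_dividend])
  then have "(\<Sum>n<N div 2. kmom N n * (\<Sum>l = 1..N div (2 * n + 1). real l powr (1 - \<alpha>)))
      = (\<Sum>n\<in>{..<N div 2}. \<Sum>l\<in>{l \<in> {1..N}. l \<le> N div (2 * n + 1)}. kmom N n * real l powr (1 - \<alpha>))"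
    by (simp add: sum_distrib_left)
  also have "\<dots> = (\<Sum>l = 1..N. real l powr (1 - \<alpha>) *
      (\<Sum>n\<in>{n \<in> {..<N div 2}. l \<le> N div (2 * n + 1)}. kmom N n))"
    by (subst sum.swap_restrict) (auto simp: sum_distrib_left mult.commute)
  also have "\<dots> \<le> (\<Sum>l = 1..N. real l powr (1 - \<alpha>) * (pi * real N / (real l)\<^sup>2))"
    by (intro sum_mono mult_left_mono sum_kmom_restricted_le) auto
  also have "\<dots> = pi * real N * (\<Sum>l = 1..N. real l powr (- 1 - \<alpha>))"
  proof -
    have "real l powr (1 - \<alpha>) * (pi * real N / (real l)\<^sup>2) = pi * real N * real l powr (- 1 - \<alpha>)"
      for l
    proof -
      have "real l powr (1 - \<alpha>) * (pi * real N / (real l)\<^sup>2) = pi * real N * (real l powr (1 - \<alpha>) / (real l)\<^sup>2)"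
        by simp
      also have "real l powr (1 - \<alpha>) / (real l)\<^sup>2 = real l powr (- 1 - \<alpha>)"
        using powr_diff[of "real l" "1 - \<alpha>" 2] by (simp add: powr_realpow' ac_simps)
      finally show ?thesis .
    qed
    then show ?thesis by (simp add: sum_distrib_left)
  qed
  also have "\<dots> \<le> pi * real N * (1 + 1 / \<alpha>)"
    by (intro mult_left_mono sum_powr_neg_one_minus_le assms) simp
  finally show ?thesis by (simp add: ac_simps)
qed

lemma sum_powr_div_odd_le:
  assumes "0 < \<alpha>"
  shows "(\<Sum>n<N div 2. (real N / real (2 * n + 1)) powr (1 - \<alpha>)) \<le> (1 + 1 / \<alpha>) * real N"
proof -
  have "(\<Sum>n<N div 2. real (2 * n + 1) powr (\<alpha> - 1))
      = (\<Sum>j\<in>(\<lambda>n. 2 * n + 1) ` {..<N div 2}. real j powr (\<alpha> - 1))"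
    by (rule sum.reindex[symmetric, unfolded comp_def]) (auto simp: inj_on_def)
  also have "\<dots> \<le> (\<Sum>j = 1..N. real j powr (\<alpha> - 1))"
    by (rule sum_mono2) auto
  also have "\<dots> \<le> (1 + 1 / \<alpha>) * real N powr \<alpha>"
    by (rule sum_powr_minus_one_le[OF assms])
  finally have odd_sum: "(\<Sum>n<N div 2. real (2 * n + 1) powr (\<alpha> - 1)) \<le> (1 + 1 / \<alpha>) * real N powr \<alpha>" .
  have "(real N / real (2 * n + 1)) powr (1 - \<alpha>) = real N powr (1 - \<alpha>) * real (2 * n + 1) powr (\<alpha> - 1)" for n
  proof -
    have "real (2 * n + 1) powr (\<alpha> - 1) = inverse (real (2 * n + 1) powr (1 - \<alpha>))"
      using powr_minus[of "real (2 * n + 1)" "1 - \<alpha>"] by simp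
    then show ?thesis unfolding powr_divide by (simp only: divide_inverse)
  qed
  then have "(\<Sum>n<N div 2. (real N / real (2 * n + 1)) powr (1 - \<alpha>))
      = real N powr (1 - \<alpha>) * (\<Sum>n<N div 2. real (2 * n + 1) powr (\<alpha> - 1))"
    by (simp add: sum_distrib_left)
  also have "\<dots> \<le> real N powr (1 - \<alpha>) * ((1 + 1 / \<alpha>) * real N powr \<alpha>)"
    by (rule mult_left_mono[OF odd_sum]) simp
  also have "\<dots> = (1 + 1 / \<alpha>) * real N"
    by (cases "N = 0") (simp_all add: powr_add[symmetric])
  finally show ?thesis .
qed

lemma gamma_alpha_le:
  assumes "0 < \<alpha>" "even N"
  shows "gamma_alpha \<alpha> N \<le> 29 * (1 + 1 / \<alpha>) * real N"
proof -
  define S where "S = (\<lambda>n. \<bar>sine_sum \<alpha> (N div 2 - 1) (kmom N n)\<bar>)"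
  have abs_fN_le: "\<bar>fN \<alpha> N (kmom N n)\<bar> \<le> 2 * S n + 1" for n
  proof -
    have "(real N / 2) powr (- \<alpha>) \<le> 1"
    proof (cases "N = 0")
      case False
      with \<open>even N\<close> have "1 \<le> real N / 2" by auto
      then show ?thesis using assms by (simp add: powr_minus inverse_le_1_iff ge_one_powr_ge_zero)
    qed simp
    moreover have "0 \<le> (real N / 2) powr (- \<alpha>)" by simp
    ultimately show ?thesis unfolding fN_eq_sine_sum S_def by linarith
  qed
  have "(\<Sum>n<N div 2. S n)
      \<le> (\<Sum>n<N div 2. kmom N n * (\<Sum>l = 1..N div (2 * n + 1). real l powr (1 - \<alpha>))
        + 3 * (real N / real (2 * n + 1)) powr (1 - \<alpha>))"
    unfolding S_def by (intro sum_mono abs_sine_sum_kmom_le assms) simp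
  also have "\<dots> = (\<Sum>n<N div 2. kmom N n * (\<Sum>l = 1..N div (2 * n + 1). real l powr (1 - \<alpha>)))
        + 3 * (\<Sum>n<N div 2. (real N / real (2 * n + 1)) powr (1 - \<alpha>))"
    by (simp add: sum.distrib sum_distrib_left)
  also have "\<dots> \<le> pi * (1 + 1 / \<alpha>) * real N + 3 * ((1 + 1 / \<alpha>) * real N)"
    using sum_kmom_mult_sum_powr_le[OF assms(1), of N] sum_powr_div_odd_le[OF assms(1), of N] by linarith
  finally have half_sum_le: "(\<Sum>n<N div 2. S n) \<le> (pi + 3) * ((1 + 1 / \<alpha>) * real N)"
    by (simp add: algebra_simps)
  have "(\<Sum>n<N. S n) = 2 * (\<Sum>n<N div 2. S n)"
    using sum_lessThan_double_reflect[of "N div 2" S] sine_sum_kmom_reflect \<open>even N\<close>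
    by (simp add: S_def)
  moreover have "gamma_alpha \<alpha> N \<le> (\<Sum>n<N. 2 * S n + 1)"
    unfolding gamma_alpha_def atLeast0LessThan by (rule sum_mono) (rule abs_fN_le)
  ultimately have "gamma_alpha \<alpha> N \<le> 4 * (\<Sum>n<N div 2. S n) + real N"
    by (simp add: sum.distrib sum_distrib_left[symmetric])
  also have "\<dots> \<le> 4 * ((pi + 3) * ((1 + 1 / \<alpha>) * real N)) + (1 + 1 / \<alpha>) * real N"
    using half_sum_le assms by (intro add_mono) (auto simp: field_simps)
  also have "\<dots> = (4 * pi + 13) * ((1 + 1 / \<alpha>) * real N)"
    by (simp add: algebra_simps)
  also have "\<dots> \<le> 29 * ((1 + 1 / \<alpha>) * real N)"
    using pi_less_4 assms by (intro mult_right_mono) auto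
  finally show ?thesis by (simp only: mult.assoc)
qed

lemma I0_bounds:
  assumes "0 \<le> c" "c * real N \<le> gamma_alpha \<alpha> N" "gamma_alpha \<alpha> N \<le> C * real N"
  shows "(c / 2)\<^sup>2 * T\<^sup>2 * (real N)\<^sup>2 \<le> I0 \<alpha> N T" "I0 \<alpha> N T \<le> (C / 2)\<^sup>2 * T\<^sup>2 * (real N)\<^sup>2"
proof -
  have "0 \<le> c * real N" using assms(1) by simp
  then have "0 \<le> gamma_alpha \<alpha> N" using assms(2) by linarith
  have "(c / 2)\<^sup>2 * T\<^sup>2 * (real N)\<^sup>2 = (c * real N / 2)\<^sup>2 * T\<^sup>2"
    by (simp add: power2_eq_square)
  also have "\<dots> \<le> I0 \<alpha> N T"
    unfolding I0_def using assms(2) \<open>0 \<le> c * real N\<close> by (intro mult_right_mono power_mono) auto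
  finally show "(c / 2)\<^sup>2 * T\<^sup>2 * (real N)\<^sup>2 \<le> I0 \<alpha> N T" .
  have "I0 \<alpha> N T \<le> (C * real N / 2)\<^sup>2 * T\<^sup>2"
    unfolding I0_def using assms(3) \<open>0 \<le> gamma_alpha \<alpha> N\<close> by (intro mult_right_mono power_mono) auto
  also have "\<dots> = (C / 2)\<^sup>2 * T\<^sup>2 * (real N)\<^sup>2"
    by (simp add: power2_eq_square)
  finally show "I0 \<alpha> N T \<le> (C / 2)\<^sup>2 * T\<^sup>2 * (real N)\<^sup>2" .
qed

theorem mainTheorem7:
  fixes \<alpha> :: real
  assumes "\<alpha> > 0"
  shows "\<exists>c C N0. 0 < c \<and> c \<le> C \<and>
    (\<forall>N::nat. even N \<and> N \<ge> 4 \<and> N \<ge> N0 \<longrightarrow>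
       c * real N \<le> gamma_alpha \<alpha> N \<and> gamma_alpha \<alpha> N \<le> C * real N \<and>
       (\<forall>T::real. T > 0 \<longrightarrow>
          (c / 2)^2 * T^2 * (real N)^2 \<le> I0 \<alpha> N T \<and>
          I0 \<alpha> N T \<le> (C / 2)^2 * T^2 * (real N)^2))"
proof (rule exI[of _ 1], rule exI[of _ "29 * (1 + 1 / \<alpha>)"], rule exI[of _ 0], intro conjI allI impI)
  show "1 \<le> 29 * (1 + 1 / \<alpha>)"
    using assms by simp
  fix N :: nat and T :: real
  assume N: "even N \<and> 4 \<le> N \<and> 0 \<le> N"
  show lower: "1 * real N \<le> gamma_alpha \<alpha> N"
    using gamma_alpha_ge N by simp
  show upper: "gamma_alpha \<alpha> N \<le> 29 * (1 + 1 / \<alpha>) * real N"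
    using gamma_alpha_le assms N by simp
  show "(1 / 2)\<^sup>2 * T\<^sup>2 * (real N)\<^sup>2 \<le> I0 \<alpha> N T"
    "I0 \<alpha> N T \<le> (29 * (1 + 1 / \<alpha>) / 2)\<^sup>2 * T\<^sup>2 * (real N)\<^sup>2"
    using I0_bounds[OF _ lower upper] by simp_all
qed simp

end
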